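(* Assume $\Omega$ is strictly convex, $\mu(\Omega)<\int_{\mathbb{R}^d}R(\boldsymbol{p})\,d\boldsymbol{p}$, and $I\subset(0,1)$ is an admissible mesh family for $\Omega$. For $h\in I$ let $u_h$ be the (unique) solution of the finite element problem on $\mathcal T_h$. Then there exists a constant $M>0$ such that $\|u_h\|_{L^\infty(\Omega_h)}\le M$ for all $h\in I$.
   Context: $\Omega\subset\mathbb{R}^d$ is a bounded open convex domain; $g\in C(\partial\Omega)$; $R:\mathbb{R}^d\to(0,\infty)$ locally integrable; $\mu$ a nonnegative Borel measure on $\Omega$; $W^+(U)$ the convex real-valued functions on open convex $U$; $\partial u(\boldsymbol{x})=\{\boldsymbol{p}:\ u(\boldsymbol{y})\ge u(\boldsymbol{x})+\boldsymbol{p}\cdot(\boldsymbol{y}-\boldsymbol{x})\ \forall\boldsymbol{y}\in U\}$. Strict convexity: $\lambda\boldsymbol{x}+(1-\lambda)\boldsymbol{x}'\in\Omega$ for $\boldsymbol{x},\boldsymbol{x}'\in\overline\Omega$, $0<\lambda<1$. $\Omega_\delta=\{\boldsymbol{x}\in\Omega:\operatorname{dist}(\boldsymbol{x},\partial\Omega)>\delta\}$. A mesh of $\Omega$ with parameter $h>0$ is a finite set $\mathcal T_h$ of closed $d$-simplices contained in $\overline\Omega$ such that: (i) for $T\ne T'$, $T\cap T'$ is a common sub-simplex of both of dimension at most $d-1$; (ii) $h=\max_T\operatorname{diam}T$; (iii) $\Omega_h:=\operatorname{Int}(\bigcup_{T}T)$ is convex; (iv) every vertex of $\mathcal T_h$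 on $\partial\Omega_h$ belongs to $\partial\Omega$. Interior vertices $\boldsymbol{A}_1,\dots,\boldsymbol{A}_{k_h}$, vertices on $\partial\Omega_h$: $\boldsymbol{B}_1,\dots,\boldsymbol{B}_{m_h}$. $M_h(z)$ is the convex hull in $\mathbb{R}^{d+1}$ of $\{(\boldsymbol{A}_i,z_i)\}\cup\{(\boldsymbol{B}_j,g(\boldsymbol{B}_j))\}$; $H_h$ is the set of $v\in W^+(\Omega_h)\cap C(\overline{\Omega_h})$ with $v(\boldsymbol{x})=\inf\{t:(\boldsymbol{x},t)\in M_h(z)\}$ on $\overline{\Omega_h}$ for some $z\in\mathbb{R}^{k_h}$. $\phi_{i,h}$ is the continuous function on $\overline{\Omega_h}$, affine on each simplex, with $\phi_{i,h}(\boldsymbol{A}_j)=\delta_{ij}$, $\phi_{i,h}(\boldsymbol{B}_j)=0$. The finite element problem: find $u_h\in H_h$ with $\int_{\partial u_h(\boldsymbol{A}_i)}R\,d\boldsymbol{p}=\int_{\Omega_h}\phi_{i,h}\,d\mu$ for $1\le i\le k_h$ (sub-differential relative to $\Omega_h$); under the stated hypotheses it has a unique solution. An admissible mesh family is $I\subset(0,1)$ with $0$ as unique accumulation point, a mesh $\mathcal T_h$ for each $h\in I$, and for every $\delta>0$ an $h_\delta>0$ with $\overline{\Omega_\delta}\subset\Omega_h$ for $h\in I$, $h<h_\delta$. *)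

theory Defs
  imports "HOL-Analysis.Analysis"
begin

definition subdiff :: "('a::euclidean_space \<Rightarrow> real) \<Rightarrow> 'a set \<Rightarrow> 'a \<Rightarrow> 'a set" where
  "subdiff u U x = {p. \<forall>y\<in>U. u y \<ge> u x + p \<bullet> (y - x)}"

definition strictly_convex_dom :: "'a::euclidean_space set \<Rightarrow> bool" where
  "strictly_convex_dom \<Omega> \<longleftrightarrow>
     (\<forall>x\<in>closure \<Omega>. \<forall>x'\<in>closure \<Omega>. \<forall>t::real. x \<noteq> x' \<and> 0 < t \<and> t < 1
        \<longrightarrow> t *\<^sub>R x + (1 - t) *\<^sub>R x' \<in> \<Omega>)"

definition locally_integrable :: "('a::euclidean_space \<Rightarrow> real) \<Rightarrow> bool" where
  "locally_integrable R \<longleftrightarrow> (\<forall>K. compact K \<longrightarrow> set_integrable lborel K R)"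

definition inner_dom :: "'a::euclidean_space set \<Rightarrow> real \<Rightarrow> 'a set" where
  "inner_dom \<Omega> \<delta> = {x\<in>\<Omega>. infdist x (frontier \<Omega>) > \<delta>}"

text \<open>A mesh is a set of closed d-simplices (as point sets).\<close>
definition mesh_domain :: "'a::euclidean_space set set \<Rightarrow> 'a set" where
  "mesh_domain \<T> = interior (\<Union>\<T>)"

definition mesh_vertices :: "'a::euclidean_space set set \<Rightarrow> 'a set" where
  "mesh_vertices \<T> = (\<Union>T\<in>\<T>. {x. x extreme_point_of T})"

definition interior_vertices :: "'a::euclidean_space set set \<Rightarrow> 'a set" where
  "interior_vertices \<T> = {A \<in> mesh_vertices \<T>. A \<in> mesh_domain \<T>}"

definition boundary_vertices :: "'a::euclidean_space set set \<Rightarrow> 'a set" where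
  "boundary_vertices \<T> = {B \<in> mesh_vertices \<T>. B \<in> frontier (mesh_domain \<T>)}"

definition is_mesh :: "'a::euclidean_space set \<Rightarrow> 'a set set \<Rightarrow> real \<Rightarrow> bool" where
  "is_mesh \<Omega> \<T> h \<longleftrightarrow>
     finite \<T> \<and> \<T> \<noteq> {} \<and>
     (\<forall>T\<in>\<T>. (int DIM('a)) simplex T \<and> T \<subseteq> closure \<Omega>) \<and>
     (\<forall>T\<in>\<T>. \<forall>T'\<in>\<T>. T \<noteq> T' \<longrightarrow>
        (\<exists>n. n \<le> int DIM('a) - 1 \<and> n simplex (T \<inter> T') \<and>
             (T \<inter> T') face_of T \<and> (T \<inter> T') face_of T')) \<and>
     h = Max (diameter ` \<T>) \<and>
     convex (mesh_domain \<T>) \<and>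
     (\<forall>V\<in>mesh_vertices \<T>. V \<in> frontier (mesh_domain \<T>) \<longrightarrow> V \<in> frontier \<Omega>)"

definition discrete_hull_fun ::
  "'a::euclidean_space set set \<Rightarrow> ('a \<Rightarrow> real) \<Rightarrow> ('a \<Rightarrow> real) \<Rightarrow> 'a \<Rightarrow> real" where
  "discrete_hull_fun \<T> g z x =
     Inf {t. (x, t) \<in> convex hull
              ((\<lambda>A. (A, z A)) ` interior_vertices \<T> \<union> (\<lambda>B. (B, g B)) ` boundary_vertices \<T>)}"

definition H_space :: "'a::euclidean_space set set \<Rightarrow> ('a \<Rightarrow> real) \<Rightarrow> ('a \<Rightarrow> real) set" where
  "H_space \<T> g = {v. convex_on (mesh_domain \<T>) v \<and> continuous_on (closure (mesh_domain \<T>)) v \<and>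
      (\<exists>z. \<forall>x\<in>closure (mesh_domain \<T>). v x = discrete_hull_fun \<T> g z x)}"

definition is_hat_fun :: "'a::euclidean_space set set \<Rightarrow> 'a \<Rightarrow> ('a \<Rightarrow> real) \<Rightarrow> bool" where
  "is_hat_fun \<T> A \<phi> \<longleftrightarrow>
     continuous_on (closure (mesh_domain \<T>)) \<phi> \<and>
     (\<forall>T\<in>\<T>. \<exists>c b. \<forall>x\<in>T. \<phi> x = c \<bullet> x + b) \<and>
     \<phi> A = 1 \<and> (\<forall>V\<in>mesh_vertices \<T>. V \<noteq> A \<longrightarrow> \<phi> V = 0)"

definition fe_solution ::
  "'a::euclidean_space set set \<Rightarrow> ('a \<Rightarrow> real) \<Rightarrow> ('a \<Rightarrow> real) \<Rightarrow> 'a measure \<Rightarrow> ('a \<Rightarrow> real) \<Rightarrow> bool" where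
  "fe_solution \<T> g R \<mu> u \<longleftrightarrow>
     u \<in> H_space \<T> g \<and>
     (\<forall>A\<in>interior_vertices \<T>. \<forall>\<phi>. is_hat_fun \<T> A \<phi> \<longrightarrow>
        (LINT p:subdiff u (mesh_domain \<T>) A|lborel. R p) = (LINT x:mesh_domain \<T>|\<mu>. \<phi> x))"

definition admissible_mesh_family ::
  "'a::euclidean_space set \<Rightarrow> real set \<Rightarrow> (real \<Rightarrow> 'a set set) \<Rightarrow> bool" where
  "admissible_mesh_family \<Omega> I \<T> \<longleftrightarrow>
     I \<subseteq> {0<..<1} \<and> 0 islimpt I \<and> (\<forall>x. x \<noteq> 0 \<longrightarrow> \<not> x islimpt I) \<and>
     (\<forall>h\<in>I. is_mesh \<Omega> (\<T> h) h) \<and>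
     (\<forall>\<delta>>0. \<exists>h\<delta>>0. \<forall>h\<in>I. h < h\<delta> \<longrightarrow> closure (inner_dom \<Omega> \<delta>) \<subseteq> mesh_domain (\<T> h))"

end

theory Submission
  imports Defs
begin

text \<open>
  Every \<open>u\<^sub>h\<close> is the lower convex envelope of its nodal values, the boundary nodes carrying
  values of \<open>g\<close>; hence \<open>u\<^sub>h \<le> G := max |g|\<close>. For the lower bound we use Alexandrov's
  argument. Fix \<open>r\<close> with \<open>\<integral>\<^bsub>B\<^sub>r\<^esub> R > \<mu>(\<Omega>)\<close>. If \<open>u\<^sub>h(x\<^sub>0) < -(G + r diam \<Omega>)\<close>,
  then for each slope \<open>|p| \<le> r\<close> the plane of slope \<open>p\<close> through the lowest lifted node
  supports the envelope, and it cannot touch at a boundary node, so \<open>p\<close> is a subgradient at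
  an interior vertex. Thus \<open>B\<^sub>r\<close> is covered by the sub-differentials at interior vertices,
  and the finite element equations give
  \<open>\<integral>\<^bsub>B\<^sub>r\<^esub> R \<le> \<Sigma>\<^sub>i \<integral> \<phi>\<^sub>i d\<mu> \<le> \<mu>(\<Omega>)\<close> because the nodal basis functions sum to at most 1.
\<close>

section \<open>Affine functions and barycentric coordinates\<close>

definition affine_fun :: "('a::real_inner \<Rightarrow> real) \<Rightarrow> bool" where
  "affine_fun f \<longleftrightarrow> (\<exists>c b. f = (\<lambda>x. c \<bullet> x + b))"

lemma affine_fun_le_on_convex_hull:
  assumes "affine_fun f" "\<And>w. w \<in> C \<Longrightarrow> f w \<le> k" "x \<in> convex hull C"
  shows "f x \<le> k"
proof -
  obtain c b where f: "f = (\<lambda>x. c \<bullet> x + b)" using assms(1) unfolding affine_fun_def by blast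
  have "convex hull C \<subseteq> {x. c \<bullet> x \<le> k - b}"
    using assms(2) by (intro hull_minimal convex_halfspace_le) (auto simp: f algebra_simps)
  then show ?thesis using assms(3) by (auto simp: f algebra_simps)
qed

lemma affine_fun_uminus:
  assumes "affine_fun f"
  shows "affine_fun (\<lambda>x. - f x)"
proof -
  obtain c b where "f = (\<lambda>x. c \<bullet> x + b)" using assms unfolding affine_fun_def by blast
  then have "(\<lambda>x. - f x) = (\<lambda>x. (- c) \<bullet> x + (- b))" by simp
  then show ?thesis unfolding affine_fun_def by blast
qed

lemma affine_fun_ge_on_convex_hull:
  assumes "affine_fun f" "\<And>w. w \<in> C \<Longrightarrow> k \<le> f w" "x \<in> convex hull C"
  shows "k \<le> f x"
  using affine_fun_le_on_convex_hull[OF affine_fun_uminus[OF assms(1)], of C "- k" x] assms(2,3)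
  by simp

lemma affine_fun_eq_on_convex_hull:
  assumes "affine_fun f" "\<And>w. w \<in> C \<Longrightarrow> f w = k" "x \<in> convex hull C"
  shows "f x = k"
proof (rule order.antisym)
  show "f x \<le> k" by (rule affine_fun_le_on_convex_hull[OF assms(1) _ assms(3)]) (simp add: assms(2))
  show "k \<le> f x" by (rule affine_fun_ge_on_convex_hull[OF assms(1) _ assms(3)]) (simp add: assms(2))
qed

lemma affine_fun_diff:
  assumes "affine_fun f" "affine_fun g"
  shows "affine_fun (\<lambda>x. f x - g x)"
proof -
  obtain c b c' b' where "f = (\<lambda>x. c \<bullet> x + b)" "g = (\<lambda>x. c' \<bullet> x + b')"
    using assms unfolding affine_fun_def by blast
  then have "(\<lambda>x. f x - g x) = (\<lambda>x. (c - c') \<bullet> x + (b - b'))"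
    by (simp add: inner_diff_left algebra_simps)
  then show ?thesis unfolding affine_fun_def by blast
qed

lemma affine_fun_sum:
  assumes "\<And>i. i \<in> S \<Longrightarrow> affine_fun (f i)"
  shows "affine_fun (\<lambda>x. \<Sum>i\<in>S. f i x)"
proof -
  obtain c b where "\<And>i. i \<in> S \<Longrightarrow> f i = (\<lambda>x. c i \<bullet> x + b i)"
    using assms unfolding affine_fun_def by metis
  then have "(\<lambda>x. \<Sum>i\<in>S. f i x) = (\<lambda>x. (\<Sum>i\<in>S. c i) \<bullet> x + (\<Sum>i\<in>S. b i))"
    by (simp add: inner_sum_left sum.distrib)
  then show ?thesis unfolding affine_fun_def by blast
qed

lemma affine_fun_continuous_on: "affine_fun f \<Longrightarrow> continuous_on S f"
  unfolding affine_fun_def by (auto intro!: continuous_intros)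

lemma affine_interpolation_exists:
  fixes C :: "'a::euclidean_space set"
  assumes "\<not> affine_dependent C"
  shows "\<exists>f. affine_fun f \<and> (\<forall>w\<in>C. f w = v w)"
proof (cases "C = {}")
  case True
  then show ?thesis unfolding affine_fun_def by blast
next
  case False
  then obtain a where a: "a \<in> C" by auto
  have "\<not> dependent ((\<lambda>x. -a + x) ` (C - {a}))"
    using assms affine_dependent_iff_dependent[of a "C - {a}"] a by (simp add: insert_absorb)
  then obtain l where l: "linear l" "\<And>w. w \<in> C - {a} \<Longrightarrow> l (-a + w) = v (a + (-a + w)) - v a"
    using linear_independent_extend[of "(\<lambda>x. -a + x) ` (C - {a})" "\<lambda>y. v (a + y) - v a"] by auto
  define c where "c = adjoint l 1"
  have lc: "l y = c \<bullet> y" for y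
    using adjoint_works[OF l(1), of y 1] unfolding c_def by (simp add: inner_commute)
  show ?thesis
  proof (intro exI conjI ballI)
    show "affine_fun (\<lambda>x. c \<bullet> x + (v a - c \<bullet> a))" unfolding affine_fun_def by blast
    fix w assume "w \<in> C"
    then show "c \<bullet> w + (v a - c \<bullet> a) = v w"
    proof (cases "w = a")
      case False
      with \<open>w \<in> C\<close> have "c \<bullet> (w - a) = v w - v a" using l(2)[of w] lc[of "-a + w"] by simp
      then show ?thesis by (simp add: inner_diff_right)
    qed simp
  qed
qed

definition bary_coord :: "'a::euclidean_space set \<Rightarrow> 'a \<Rightarrow> 'a \<Rightarrow> real" where
  "bary_coord C A = (SOME f. affine_fun f \<and> (\<forall>w\<in>C. f w = (if w = A then 1 else 0)))"

lemma
  assumes "\<not> affine_dependent C"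
  shows bary_coord_affine: "affine_fun (bary_coord C A)"
    and bary_coord_vertex: "w \<in> C \<Longrightarrow> bary_coord C A w = (if w = A then 1 else 0)"
proof -
  have "\<exists>f. affine_fun f \<and> (\<forall>w\<in>C. f w = (if w = A then 1 else 0))"
    by (rule affine_interpolation_exists[OF assms])
  then have "affine_fun (bary_coord C A) \<and> (\<forall>w\<in>C. bary_coord C A w = (if w = A then 1 else 0))"
    unfolding bary_coord_def by (rule someI_ex)
  then show "affine_fun (bary_coord C A)" "w \<in> C \<Longrightarrow> bary_coord C A w = (if w = A then 1 else 0)"
    by auto
qed

section \<open>Meshes\<close>

definition extreme_points :: "'a::real_vector set \<Rightarrow> 'a set" where
  "extreme_points T = {x. x extreme_point_of T}"

lemma simplex_extreme_points:
  fixes T :: "'a::euclidean_space set"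
  assumes "n simplex T"
  shows "finite (extreme_points T)" "\<not> affine_dependent (extreme_points T)"
    "convex hull (extreme_points T) = T"
proof -
  obtain C where C: "finite C" "\<not> affine_dependent C" "T = convex hull C"
    using assms unfolding simplex by auto
  then have "extreme_points T = C"
    by (auto simp: extreme_points_def extreme_point_of_convex_hull_affine_independent)
  with C show "finite (extreme_points T)" "\<not> affine_dependent (extreme_points T)"
    "convex hull (extreme_points T) = T" by simp_all
qed

lemma closure_interior_full_simplex:
  fixes T :: "'a::euclidean_space set"
  assumes "(int DIM('a)) simplex T"
  shows "closure (interior T) = T"
proof -
  obtain C where C: "int (card C) = int DIM('a) + 1" "T = convex hull C"
    using assms unfolding simplex by auto
  then have "T \<noteq> {}" by auto
  moreover have "convex T" using C(2) by simp
  moreover have "affine hull T = UNIV"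
    using aff_dim_simplex[OF assms] aff_dim_eq_full by blast
  ultimately have "interior T \<noteq> {}"
    using rel_interior_interior rel_interior_eq_empty by metis
  then show ?thesis
    using convex_closure_interior[OF \<open>convex T\<close>] closed_simplex[OF assms] by simp
qed

lemma is_meshD:
  fixes \<Omega> :: "'a::euclidean_space set"
  assumes "is_mesh \<Omega> \<T> h"
  shows "finite \<T>" "\<And>T. T \<in> \<T> \<Longrightarrow> (int DIM('a)) simplex T" "\<Union>\<T> \<subseteq> closure \<Omega>"
    "convex (mesh_domain \<T>)"
    "\<And>V. V \<in> mesh_vertices \<T> \<Longrightarrow> V \<in> frontier (mesh_domain \<T>) \<Longrightarrow> V \<in> frontier \<Omega>"
    "\<And>T T'. T \<in> \<T> \<Longrightarrow> T' \<in> \<T> \<Longrightarrow> T \<noteq> T' \<Longrightarrow> (T \<inter> T') face_of T \<and> (T \<inter> T') face_of T'"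
  using assms unfolding is_mesh_def by auto

lemma closure_mesh_domain:
  fixes \<Omega> :: "'a::euclidean_space set"
  assumes "is_mesh \<Omega> \<T> h"
  shows "closure (mesh_domain \<T>) = \<Union>\<T>"
proof
  have "closed (\<Union>\<T>)"
    using is_meshD(1,2)[OF assms] closed_simplex by (intro closed_Union) auto
  then show "closure (mesh_domain \<T>) \<subseteq> \<Union>\<T>"
    unfolding mesh_domain_def by (rule closure_minimal[OF interior_subset])
  have "T \<subseteq> closure (mesh_domain \<T>)" if "T \<in> \<T>" for T
  proof -
    have "interior T \<subseteq> mesh_domain \<T>"
      unfolding mesh_domain_def using that by (intro interior_mono) auto
    then show ?thesis
      using closure_mono closure_interior_full_simplex[OF is_meshD(2)[OF assms that]] by metis
  qed
  then show "\<Union>\<T> \<subseteq> closure (mesh_domain \<T>)" by blast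
qed

lemma finite_mesh_vertices:
  fixes \<Omega> :: "'a::euclidean_space set"
  assumes "is_mesh \<Omega> \<T> h"
  shows "finite (mesh_vertices \<T>)"
  using is_meshD(1,2)[OF assms] simplex_extreme_points(1)
  unfolding mesh_vertices_def extreme_points_def by blast

lemma mesh_domain_subset:
  fixes \<Omega> :: "'a::euclidean_space set"
  assumes "is_mesh \<Omega> \<T> h" "convex \<Omega>" "open \<Omega>"
  shows "mesh_domain \<T> \<subseteq> \<Omega>"
proof -
  have "mesh_domain \<T> \<subseteq> interior (closure \<Omega>)"
    unfolding mesh_domain_def using is_meshD(3)[OF assms(1)] by (rule interior_mono)
  also have "\<dots> = \<Omega>" using convex_interior_closure[OF assms(2)] assms(3) interior_open by simp
  finally show ?thesis .
qed

lemma compact_closure_mesh_domain: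
  fixes \<Omega> :: "'a::euclidean_space set"
  assumes "is_mesh \<Omega> \<T> h"
  shows "compact (closure (mesh_domain \<T>))"
  unfolding closure_mesh_domain[OF assms]
  using is_meshD(1,2)[OF assms] compact_simplex by (intro compact_Union) auto

lemma closure_mesh_domain_subset_hull_boundary_vertices:
  fixes \<Omega> :: "'a::euclidean_space set"
  assumes "is_mesh \<Omega> \<T> h"
  shows "closure (mesh_domain \<T>) \<subseteq> convex hull (boundary_vertices \<T>)"
proof -
  let ?K = "closure (mesh_domain \<T>)"
  have "?K = convex hull {x. x extreme_point_of ?K}"
    using Krein_Milman_Minkowski compact_closure_mesh_domain[OF assms]
      convex_closure[OF is_meshD(4)[OF assms]] by blast
  also have "\<dots> \<subseteq> convex hull (boundary_vertices \<T>)"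
  proof (rule hull_mono, safe)
    fix e assume e: "e extreme_point_of ?K"
    then have "e \<in> ?K" by (simp add: extreme_point_of_def)
    then obtain T where T: "T \<in> \<T>" "e \<in> T" using closure_mesh_domain[OF assms] by auto
    have "T \<subseteq> ?K" using closure_mesh_domain[OF assms] T by auto
    then have "e extreme_point_of T" using e T unfolding extreme_point_of_def by blast
    then have "e \<in> mesh_vertices \<T>" using T unfolding mesh_vertices_def by blast
    moreover have "e \<notin> mesh_domain \<T>"
      using extreme_point_not_in_interior[OF e] interior_maximal[OF closure_subset]
      by (metis mesh_domain_def open_interior subsetD)
    ultimately show "e \<in> boundary_vertices \<T>"
      unfolding boundary_vertices_def frontier_def using \<open>e \<in> ?K\<close>
      by (simp add: mesh_domain_def)
  qed
  finally show ?thesis .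
qed

lemma boundary_vertex_in_frontier:
  fixes \<Omega> :: "'a::euclidean_space set"
  assumes "is_mesh \<Omega> \<T> h" "B \<in> boundary_vertices \<T>"
  shows "B \<in> frontier \<Omega>"
  using assms(2) is_meshD(5)[OF assms(1)] unfolding boundary_vertices_def by blast

lemma bary_coord_agree:
  fixes \<Omega> :: "'a::euclidean_space set"
  assumes "is_mesh \<Omega> \<T> h" "T \<in> \<T>" "T' \<in> \<T>" "x \<in> T" "x \<in> T'"
  shows "bary_coord (extreme_points T) A x = bary_coord (extreme_points T') A x"
proof (cases "T = T'")
  case False
  note V = simplex_extreme_points[OF is_meshD(2)[OF assms(1,2)]]
  note V' = simplex_extreme_points[OF is_meshD(2)[OF assms(1,3)]]
  obtain F where F: "F \<subseteq> extreme_points T" "T \<inter> T' = convex hull F"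
    using is_meshD(6)[OF assms(1-3) False] face_of_convex_hull_affine_independent[OF V(2)] V(3)
    by metis
  obtain F' where F': "F' \<subseteq> extreme_points T'" "T \<inter> T' = convex hull F'"
    using is_meshD(6)[OF assms(1-3) False] face_of_convex_hull_affine_independent[OF V'(2)] V'(3)
    by metis
  have "F \<subseteq> extreme_points T'"
  proof
    fix w assume "w \<in> F"
    then have "w extreme_point_of (convex hull F')"
      using extreme_point_of_convex_hull_affine_independent affine_independent_subset[OF V(2) F(1)] F F'
      by metis
    then show "w \<in> extreme_points T'" using F'(1) extreme_point_of_convex_hull by blast
  qed
  then have "bary_coord (extreme_points T) A w - bary_coord (extreme_points T') A w = 0"
    if "w \<in> F" for w
  proof -
    have "w \<in> extreme_points T" "w \<in> extreme_points T'"
      using that F(1) \<open>F \<subseteq> extreme_points T'\<close> by blast+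
    then show ?thesis
      unfolding bary_coord_vertex[OF V(2) \<open>w \<in> extreme_points T\<close>]
        bary_coord_vertex[OF V'(2) \<open>w \<in> extreme_points T'\<close>] by simp
  qed
  moreover have "x \<in> convex hull F" using F(2) assms(4,5) by blast
  ultimately have "bary_coord (extreme_points T) A x - bary_coord (extreme_points T') A x = 0"
    by (rule affine_fun_eq_on_convex_hull[OF affine_fun_diff[OF bary_coord_affine[OF V(2)]
          bary_coord_affine[OF V'(2)]]])
  then show ?thesis by simp
qed simp

section \<open>Nodal basis functions\<close>

text \<open>The simplex chosen by \<open>SOME\<close> does not matter, by \<open>bary_coord_agree\<close>.\<close>

definition hat_fun :: "'a::euclidean_space set set \<Rightarrow> 'a \<Rightarrow> 'a \<Rightarrow> real" where
  "hat_fun \<T> A x = bary_coord (extreme_points (SOME T. T \<in> \<T> \<and> x \<in> T)) A x"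

lemma hat_fun_eq:
  fixes \<Omega> :: "'a::euclidean_space set"
  assumes "is_mesh \<Omega> \<T> h" "T \<in> \<T>" "x \<in> T"
  shows "hat_fun \<T> A x = bary_coord (extreme_points T) A x"
proof -
  let ?T = "SOME T. T \<in> \<T> \<and> x \<in> T"
  have "?T \<in> \<T> \<and> x \<in> ?T" using assms(2,3) by (rule someI[of "\<lambda>T. T \<in> \<T> \<and> x \<in> T", OF conjI])
  then show ?thesis unfolding hat_fun_def using bary_coord_agree[OF assms(1) _ assms(2) _ assms(3)] by blast
qed

lemma is_hat_fun_hat_fun:
  fixes \<Omega> :: "'a::euclidean_space set"
  assumes mesh: "is_mesh \<Omega> \<T> h" and A: "A \<in> mesh_vertices \<T>"
  shows "is_hat_fun \<T> A (hat_fun \<T> A)"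
proof -
  have aff: "affine_fun (bary_coord (extreme_points T) A)" if "T \<in> \<T>" for T
    using bary_coord_affine simplex_extreme_points(2) is_meshD(2)[OF mesh that] by blast
  have vertex: "hat_fun \<T> A V = (if V = A then 1 else 0)" if "V \<in> mesh_vertices \<T>" for V
  proof -
    obtain T where T: "T \<in> \<T>" "V \<in> extreme_points T"
      using \<open>V \<in> mesh_vertices \<T>\<close> by (auto simp: mesh_vertices_def extreme_points_def)
    then have "V \<in> T" by (auto simp: extreme_points_def extreme_point_of_def)
    then show ?thesis
      using hat_fun_eq[OF mesh T(1)] bary_coord_vertex[OF simplex_extreme_points(2)[OF is_meshD(2)[OF mesh T(1)]] T(2)]
      by simp
  qed
  have "continuous_on (\<Union>T\<in>\<T>. T) (hat_fun \<T> A)"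
  proof (rule continuous_on_closed_Union[OF is_meshD(1)[OF mesh]])
    fix T assume T: "T \<in> \<T>"
    show "closed T" using closed_simplex is_meshD(2)[OF mesh T] .
    show "continuous_on T (hat_fun \<T> A)"
      using affine_fun_continuous_on[OF aff[OF T]] by (rule continuous_on_eq) (simp add: hat_fun_eq[OF mesh T])
  qed
  moreover have "\<exists>c b. \<forall>x\<in>T. hat_fun \<T> A x = c \<bullet> x + b" if T: "T \<in> \<T>" for T
  proof -
    obtain c b where "bary_coord (extreme_points T) A = (\<lambda>x. c \<bullet> x + b)"
      using aff[OF T] unfolding affine_fun_def by blast
    then show ?thesis using hat_fun_eq[OF mesh T] by auto
  qed
  ultimately show ?thesis
    unfolding is_hat_fun_def closure_mesh_domain[OF mesh] using vertex A by simp
qed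

lemma hat_fun_nonneg:
  fixes \<Omega> :: "'a::euclidean_space set"
  assumes "is_mesh \<Omega> \<T> h" "x \<in> \<Union>\<T>"
  shows "0 \<le> hat_fun \<T> A x"
proof -
  obtain T where T: "T \<in> \<T>" "x \<in> T" using assms(2) by blast
  note V = simplex_extreme_points[OF is_meshD(2)[OF assms(1) T(1)]]
  have x: "x \<in> convex hull (extreme_points T)" using T(2) V(3) by simp
  have "0 \<le> bary_coord (extreme_points T) A x"
    by (rule affine_fun_ge_on_convex_hull[OF bary_coord_affine[OF V(2)] _ x])
      (simp add: bary_coord_vertex[OF V(2)])
  then show ?thesis using hat_fun_eq[OF assms(1) T] by simp
qed

lemma sum_hat_fun_le_one:
  fixes \<Omega> :: "'a::euclidean_space set"
  assumes "is_mesh \<Omega> \<T> h" "x \<in> \<Union>\<T>" "finite S"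
  shows "(\<Sum>A\<in>S. hat_fun \<T> A x) \<le> 1"
proof -
  obtain T where T: "T \<in> \<T>" "x \<in> T" using assms(2) by blast
  note V = simplex_extreme_points[OF is_meshD(2)[OF assms(1) T(1)]]
  have "(\<Sum>A\<in>S. bary_coord (extreme_points T) A w) \<le> 1" if "w \<in> extreme_points T" for w
    using assms(3) by (simp add: bary_coord_vertex[OF V(2) that] sum.delta)
  moreover have "x \<in> convex hull (extreme_points T)" using T(2) V(3) by simp
  ultimately have "(\<Sum>A\<in>S. bary_coord (extreme_points T) A x) \<le> 1"
    by (rule affine_fun_le_on_convex_hull[OF affine_fun_sum[OF bary_coord_affine[OF V(2)]]])
  then show ?thesis using hat_fun_eq[OF assms(1) T] by simp
qed

section \<open>The discrete convex envelope\<close>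

definition lifted_nodes ::
  "'a::euclidean_space set set \<Rightarrow> ('a \<Rightarrow> real) \<Rightarrow> ('a \<Rightarrow> real) \<Rightarrow> ('a \<times> real) set" where
  "lifted_nodes \<T> g z = (\<lambda>A. (A, z A)) ` interior_vertices \<T> \<union> (\<lambda>B. (B, g B)) ` boundary_vertices \<T>"

lemma finite_lifted_nodes:
  fixes \<Omega> :: "'a::euclidean_space set"
  assumes "is_mesh \<Omega> \<T> h"
  shows "finite (lifted_nodes \<T> g z)"
  using finite_mesh_vertices[OF assms]
  unfolding lifted_nodes_def interior_vertices_def boundary_vertices_def by auto

lemma discrete_hull_fun_eq_Inf:
  "discrete_hull_fun \<T> g z x = Inf {t. (x, t) \<in> convex hull lifted_nodes \<T> g z}"
  unfolding discrete_hull_fun_def lifted_nodes_def ..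

lemma affine_fun_height_above_plane: "affine_fun (\<lambda>q::'a::real_inner \<times> real. snd q - p \<bullet> fst q)"
  unfolding affine_fun_def by (rule exI[of _ "(- p, 1)"], rule exI[of _ 0]) (auto simp: inner_prod_def)

lemma affine_fun_snd: "affine_fun (snd :: 'a::real_inner \<times> real \<Rightarrow> real)"
  using affine_fun_height_above_plane[of 0] by simp

lemma discrete_hull_fun_ge:
  assumes "\<And>q. q \<in> lifted_nodes \<T> g z \<Longrightarrow> m \<le> snd q - p \<bullet> fst q"
    and "(x, t) \<in> convex hull lifted_nodes \<T> g z"
  shows "m + p \<bullet> x \<le> discrete_hull_fun \<T> g z x"
proof -
  have "m + p \<bullet> x \<le> s" if "(x, s) \<in> convex hull lifted_nodes \<T> g z" for s
    using affine_fun_ge_on_convex_hull[OF affine_fun_height_above_plane assms(1) that] by simp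
  then show ?thesis
    unfolding discrete_hull_fun_eq_Inf using assms(2)
    by (intro cInf_greatest) auto
qed

lemma discrete_hull_fun_le:
  fixes \<Omega> :: "'a::euclidean_space set"
  assumes "is_mesh \<Omega> \<T> h" "(x, t) \<in> convex hull lifted_nodes \<T> g z"
  shows "discrete_hull_fun \<T> g z x \<le> t"
proof -
  let ?L = "lifted_nodes \<T> g z"
  have "?L \<noteq> {}" using assms(2) by auto
  then have "Min (snd ` ?L) \<le> snd q" if "q \<in> convex hull ?L" for q
    using affine_fun_ge_on_convex_hull[OF affine_fun_snd _ that]
      finite_lifted_nodes[OF assms(1)] by simp
  then have "bdd_below {s. (x, s) \<in> convex hull ?L}"
    unfolding bdd_below_def by fastforce
  then show ?thesis
    unfolding discrete_hull_fun_eq_Inf using assms(2)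
    by (intro cInf_lower) auto
qed

lemma convex_hull_lifted_nodes_point_below:
  fixes \<Omega> :: "'a::euclidean_space set"
  assumes "is_mesh \<Omega> \<T> h" "x \<in> closure (mesh_domain \<T>)"
    and "\<And>B. B \<in> boundary_vertices \<T> \<Longrightarrow> g B \<le> G"
  obtains t where "(x, t) \<in> convex hull lifted_nodes \<T> g z" "t \<le> G"
proof -
  let ?Q = "(\<lambda>B. (B, g B)) ` boundary_vertices \<T>"
  have "fst ` (convex hull ?Q) = convex hull (fst ` ?Q)"
    by (rule convex_hull_linear_image[OF linear_fst])
  also have "fst ` ?Q = boundary_vertices \<T>" by force
  finally have "x \<in> fst ` (convex hull ?Q)"
    using closure_mesh_domain_subset_hull_boundary_vertices[OF assms(1)] assms(2) by blast
  then obtain q where q: "q \<in> convex hull ?Q" "fst q = x" by blast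
  have "snd q \<le> G"
    by (rule affine_fun_le_on_convex_hull[OF affine_fun_snd _ q(1)])
      (auto intro: assms(3))
  moreover have "convex hull ?Q \<subseteq> convex hull lifted_nodes \<T> g z"
    unfolding lifted_nodes_def by (intro hull_mono) auto
  moreover have "(x, snd q) = q" using q(2) by auto
  ultimately show ?thesis using q(1) that[of "snd q"] by auto
qed

lemma H_spaceE:
  assumes "u \<in> H_space \<T> g"
  obtains z where "\<And>x. x \<in> closure (mesh_domain \<T>) \<Longrightarrow> u x = discrete_hull_fun \<T> g z x"
  using assms unfolding H_space_def by blast

lemma H_space_le:
  fixes \<Omega> :: "'a::euclidean_space set"
  assumes mesh: "is_mesh \<Omega> \<T> h" and g: "\<And>y. y \<in> frontier \<Omega> \<Longrightarrow> g y \<le> G"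
    and u: "u \<in> H_space \<T> g" and x: "x \<in> closure (mesh_domain \<T>)"
  shows "u x \<le> G"
proof -
  obtain z where z: "u x = discrete_hull_fun \<T> g z x" using H_spaceE[OF u] x by metis
  obtain t where "(x, t) \<in> convex hull lifted_nodes \<T> g z" "t \<le> G"
    using convex_hull_lifted_nodes_point_below[OF mesh x] g boundary_vertex_in_frontier[OF mesh]
    by metis
  with z show ?thesis using discrete_hull_fun_le[OF mesh] by fastforce
qed

lemma H_space_ge_plane:
  fixes \<Omega> :: "'a::euclidean_space set"
  assumes mesh: "is_mesh \<Omega> \<T> h" and g: "\<And>y. y \<in> frontier \<Omega> \<Longrightarrow> g y \<le> G"
    and z: "\<And>x. x \<in> closure (mesh_domain \<T>) \<Longrightarrow> u x = discrete_hull_fun \<T> g z x"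
    and m: "\<And>q. q \<in> lifted_nodes \<T> g z \<Longrightarrow> m \<le> snd q - p \<bullet> fst q"
    and x: "x \<in> closure (mesh_domain \<T>)"
  shows "m + p \<bullet> x \<le> u x"
proof -
  obtain t where "(x, t) \<in> convex hull lifted_nodes \<T> g z"
    using convex_hull_lifted_nodes_point_below[OF mesh x] g boundary_vertex_in_frontier[OF mesh]
    by metis
  then show ?thesis using discrete_hull_fun_ge[OF m] z[OF x] by simp
qed

text \<open>
  The plane of slope \<open>p\<close> through the lifted node of least height above it lies below the
  envelope. If that node were a boundary node, the plane would force \<open>u x\<^sub>0 \<ge> -(G + r d)\<close>.
\<close>

lemma H_space_subgradient_cover:
  fixes \<Omega> :: "'a::euclidean_space set"
  assumes mesh: "is_mesh \<Omega> \<T> h" and D: "mesh_domain \<T> \<subseteq> \<Omega>"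
    and g: "\<And>y. y \<in> frontier \<Omega> \<Longrightarrow> \<bar>g y\<bar> \<le> G"
    and diam: "\<And>x y. x \<in> closure \<Omega> \<Longrightarrow> y \<in> closure \<Omega> \<Longrightarrow> norm (x - y) \<le> d"
    and u: "u \<in> H_space \<T> g" and x0: "x0 \<in> mesh_domain \<T>" and low: "u x0 < - (G + r * d)"
    and p: "norm p \<le> r"
  shows "\<exists>A\<in>interior_vertices \<T>. p \<in> subdiff u (mesh_domain \<T>) A"
proof -
  let ?D = "mesh_domain \<T>"
  obtain z where z: "\<And>x. x \<in> closure ?D \<Longrightarrow> u x = discrete_hull_fun \<T> g z x"
    using H_spaceE[OF u] by blast
  let ?L = "lifted_nodes \<T> g z"
  let ?f = "\<lambda>q. snd q - p \<bullet> fst q"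
  have g_le: "\<And>y. y \<in> frontier \<Omega> \<Longrightarrow> g y \<le> G" using g by fastforce
  have x0c: "x0 \<in> closure ?D" using x0 closure_subset by blast
  obtain t0 where "(x0, t0) \<in> convex hull ?L"
    using convex_hull_lifted_nodes_point_below[OF mesh x0c] g_le boundary_vertex_in_frontier[OF mesh]
    by metis
  then have "?L \<noteq> {}" by auto
  define q0 where "q0 = arg_min_on ?f ?L"
  have q0: "q0 \<in> ?L" "\<And>q. q \<in> ?L \<Longrightarrow> ?f q0 \<le> ?f q"
    unfolding q0_def using finite_lifted_nodes[OF mesh] \<open>?L \<noteq> {}\<close>
    by (auto intro: arg_min_if_finite(1) arg_min_least)
  have below: "?f q0 + p \<bullet> y \<le> u y" if "y \<in> closure ?D" for y
    using H_space_ge_plane[OF mesh g_le z q0(2) that] .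
  consider (boundary) B where "B \<in> boundary_vertices \<T>" "q0 = (B, g B)"
    | (interior) A where "A \<in> interior_vertices \<T>" "q0 = (A, z A)"
    using q0(1) unfolding lifted_nodes_def by blast
  then show ?thesis
  proof cases
    case boundary
    then have "B \<in> frontier \<Omega>" using boundary_vertex_in_frontier[OF mesh] by blast
    moreover have "x0 \<in> closure \<Omega>" using x0 D closure_subset by blast
    ultimately have "norm (x0 - B) \<le> d" "\<bar>g B\<bar> \<le> G"
      using diam[of x0 B] g[of B] frontier_def by auto
    moreover have "\<bar>p \<bullet> (x0 - B)\<bar> \<le> r * d"
      using Cauchy_Schwarz_ineq2[of p "x0 - B"] mult_mono[OF p \<open>norm (x0 - B) \<le> d\<close>]
        norm_ge_zero[of p] norm_ge_zero[of "x0 - B"] p by linarith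
    moreover have "g B - p \<bullet> B + p \<bullet> x0 \<le> u x0" using below[OF x0c] boundary(2) by simp
    ultimately have False using low by (simp add: inner_diff_right abs_le_iff)
    then show ?thesis ..
  next
    case interior
    then have A: "A \<in> ?D" unfolding interior_vertices_def by blast
    have "(A, z A) \<in> convex hull ?L" using q0(1) interior(2) by (simp add: hull_inc)
    then have "discrete_hull_fun \<T> g z A \<le> z A" by (rule discrete_hull_fun_le[OF mesh])
    moreover have "A \<in> closure ?D" using A closure_subset by blast
    ultimately have "u A \<le> z A" using z[of A] by simp
    have "u A + p \<bullet> (y - A) \<le> u y" if "y \<in> ?D" for y
    proof -
      have "y \<in> closure ?D" using that closure_subset by blast
      then show ?thesis
        using below[of y] \<open>u A \<le> z A\<close> interior(2) by (simp add: inner_diff_right)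
    qed
    then have "p \<in> subdiff u ?D A" unfolding subdiff_def by blast
    then show ?thesis using interior(1) by blast
  qed
qed

section \<open>Sub-differentials and the integral estimate\<close>

lemma closed_subdiff: "closed (subdiff u U x)"
proof -
  have "subdiff u U x = (\<Inter>y\<in>U. {p. (y - x) \<bullet> p \<le> u y - u x})"
    unfolding subdiff_def by (auto simp: inner_commute algebra_simps)
  then show ?thesis by (auto intro!: closed_INT closed_halfspace_le)
qed

lemma bounded_subdiff:
  fixes u :: "'a::euclidean_space \<Rightarrow> real"
  assumes "open U" "x \<in> U" "\<And>y. y \<in> U \<Longrightarrow> u y \<le> G"
  shows "bounded (subdiff u U x)"
proof -
  obtain e where e: "e > 0" "ball x e \<subseteq> U" using assms(1,2) open_contains_ball by blast
  have "norm p \<le> max 0 (2 * (G - u x) / e)" if p: "p \<in> subdiff u U x" for p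
  proof (cases "p = 0")
    case False
    let ?y = "x + (e / 2 / norm p) *\<^sub>R p"
    have "dist x ?y = e / 2" using e(1) False by (simp add: dist_norm)
    then have "?y \<in> U" using e by auto
    then have "u x + p \<bullet> (?y - x) \<le> G" using p assms(3)[of ?y] unfolding subdiff_def by fastforce
    moreover have "p \<bullet> (?y - x) = e / 2 * norm p"
      using False by (simp add: power2_norm_eq_inner[symmetric] power2_eq_square)
    ultimately have "e / 2 * norm p \<le> G - u x" by linarith
    then have "norm p \<le> 2 * (G - u x) / e" using e(1) by (simp add: field_simps)
    then show ?thesis by simp
  qed simp
  then show ?thesis unfolding bounded_iff by blast
qed

lemma compact_subdiff:
  fixes u :: "'a::euclidean_space \<Rightarrow> real"
  assumes "open U" "x \<in> U" "\<And>y. y \<in> U \<Longrightarrow> u y \<le> G"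
  shows "compact (subdiff u U x)"
  using bounded_subdiff[OF assms] closed_subdiff by (simp add: compact_eq_bounded_closed)

lemma set_integral_le_sum_of_cover:
  fixes R :: "'a::euclidean_space \<Rightarrow> real"
  assumes R: "\<And>p. 0 \<le> R p" "locally_integrable R"
    and I: "finite I" "\<And>i. i \<in> I \<Longrightarrow> compact (S i)"
    and K: "compact K" "K \<subseteq> (\<Union>i\<in>I. S i)"
  shows "(LINT p:K|lborel. R p) \<le> (\<Sum>i\<in>I. LINT p:S i|lborel. R p)"
proof -
  have int: "integrable lborel (\<lambda>p. indicator C p *\<^sub>R R p)" if "compact C" for C
    using R(2) that unfolding locally_integrable_def set_integrable_def by blast
  have "(LINT p:K|lborel. R p) \<le> integral\<^sup>L lborel (\<lambda>p. \<Sum>i\<in>I. indicator (S i) p *\<^sub>R R p)"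
    unfolding set_lebesgue_integral_def
  proof (rule integral_mono[OF int[OF K(1)] Bochner_Integration.integrable_sum[OF int[OF I(2)]]])
    fix p
    have nonneg: "0 \<le> indicator (S i) p *\<^sub>R R p" for i
      using R(1)[of p] by simp
    show "indicator K p *\<^sub>R R p \<le> (\<Sum>i\<in>I. indicator (S i) p *\<^sub>R R p)"
    proof (cases "p \<in> K")
      case True
      then obtain i where "i \<in> I" "p \<in> S i" using K(2) by blast
      then have "indicator K p *\<^sub>R R p = indicator (S i) p *\<^sub>R R p" using True by simp
      also have "\<dots> \<le> (\<Sum>i\<in>I. indicator (S i) p *\<^sub>R R p)"
        using member_le_sum[OF \<open>i \<in> I\<close> nonneg I(1)] .
      finally show ?thesis .
    qed (use nonneg in \<open>simp add: sum_nonneg\<close>)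
  qed
  also have "\<dots> = (\<Sum>i\<in>I. LINT p:S i|lborel. R p)"
    unfolding set_lebesgue_integral_def by (rule Bochner_Integration.integral_sum[OF int[OF I(2)]])
  finally show ?thesis .
qed

lemma exists_ball_set_integral_gt:
  fixes R :: "'a::euclidean_space \<Rightarrow> real" and c :: ennreal
  assumes R: "\<And>p. 0 \<le> R p" "locally_integrable R"
    and less: "c < (\<integral>\<^sup>+ p. ennreal (R p) \<partial>lborel)"
  obtains r where "0 \<le> r" "c < ennreal (LINT p:cball 0 r|lborel. R p)"
proof -
  define f where "f n p = ennreal (indicator (cball (0::'a) (real n)) p *\<^sub>R R p)" for n p
  have int: "integrable lborel (\<lambda>p. indicator (cball (0::'a) (real n)) p *\<^sub>R R p)" for n
    using R(2) compact_cball unfolding locally_integrable_def set_integrable_def by blast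
  have "incseq f"
    using R(1) by (intro incseq_SucI le_funI) (auto simp: f_def indicator_def)
  moreover have "f n \<in> borel_measurable lborel" for n
    unfolding f_def using borel_measurable_integrable[OF int] by measurable
  moreover have "(SUP n. f n p) = ennreal (R p)" for p
  proof (rule antisym)
    show "(SUP n. f n p) \<le> ennreal (R p)"
      using R(1) by (intro SUP_least) (auto simp: f_def indicator_def)
    have "f (nat \<lceil>norm p\<rceil>) p = ennreal (R p)" by (simp add: f_def)
    then show "ennreal (R p) \<le> (SUP n. f n p)" by (metis SUP_upper UNIV_I)
  qed
  ultimately have "(\<integral>\<^sup>+ p. ennreal (R p) \<partial>lborel) = (SUP n. integral\<^sup>N lborel (f n))"
    using nn_integral_monotone_convergence_SUP[of f lborel] by simp
  with less obtain n where "c < integral\<^sup>N lborel (f n)" by (auto simp: less_SUP_iff)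
  moreover have "integral\<^sup>N lborel (f n) = ennreal (LINT p:cball 0 (real n)|lborel. R p)"
    unfolding f_def set_lebesgue_integral_def using R(1)
    by (intro nn_integral_eq_integral[OF int]) (simp add: indicator_def)
  ultimately show ?thesis using that[of "real n"] by simp
qed

lemma finite_measure_null_compl:
  assumes "\<Omega> \<in> sets \<mu>" "- \<Omega> \<in> sets \<mu>" "emeasure \<mu> \<Omega> < \<infinity>" "emeasure \<mu> (- \<Omega>) = 0"
  shows "finite_measure \<mu>"
proof (rule finite_measureI)
  have "\<Omega> \<union> - \<Omega> \<in> sets \<mu>" using assms(1,2) by (rule sets.Un)
  then have "emeasure \<mu> (space \<mu>) \<le> emeasure \<mu> (\<Omega> \<union> - \<Omega>)"
    by (rule emeasure_mono[rotated]) simp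
  also have "\<dots> \<le> emeasure \<mu> \<Omega> + emeasure \<mu> (- \<Omega>)"
    using emeasure_subadditive[OF assms(1,2)] .
  finally show "emeasure \<mu> (space \<mu>) \<noteq> \<infinity>" using assms(3,4) by (auto simp: top_unique)
qed

lemma hat_fun_le_one:
  fixes \<Omega> :: "'a::euclidean_space set"
  assumes "is_mesh \<Omega> \<T> h" "x \<in> \<Union>\<T>"
  shows "hat_fun \<T> A x \<le> 1"
  using sum_hat_fun_le_one[OF assms, of "{A}"] by simp

lemma set_integrable_hat_fun:
  fixes \<Omega> :: "'a::euclidean_space set"
  assumes \<mu>: "finite_measure \<mu>" "sets \<mu> = sets borel"
    and mesh: "is_mesh \<Omega> \<T> h" and A: "A \<in> mesh_vertices \<T>"
  shows "set_integrable \<mu> (mesh_domain \<T>) (hat_fun \<T> A)"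
proof -
  let ?D = "mesh_domain \<T>"
  have D: "open ?D" "?D \<subseteq> \<Union>\<T>"
    using closure_subset closure_mesh_domain[OF mesh] by (auto simp: mesh_domain_def)
  have "continuous_on ?D (hat_fun \<T> A)"
    using is_hat_fun_hat_fun[OF mesh A] continuous_on_subset closure_subset
    unfolding is_hat_fun_def by blast
  then have "(\<lambda>x. indicator ?D x *\<^sub>R hat_fun \<T> A x) \<in> borel_measurable borel"
    using D(1) by (intro borel_measurable_continuous_on_indicator) auto
  then have "(\<lambda>x. indicator ?D x *\<^sub>R hat_fun \<T> A x) \<in> borel_measurable \<mu>"
    unfolding measurable_cong_sets[OF \<mu>(2) refl] .
  moreover have "norm (indicator ?D x *\<^sub>R hat_fun \<T> A x) \<le> 1" for x
    using hat_fun_nonneg[OF mesh] hat_fun_le_one[OF mesh] D(2)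
    by (cases "x \<in> ?D") (auto simp: abs_le_iff subset_iff)
  ultimately show ?thesis
    unfolding set_integrable_def by (intro finite_measure.integrable_const_bound[OF \<mu>(1)]) auto
qed

lemma sum_set_integral_hat_fun_le_measure:
  fixes \<Omega> :: "'a::euclidean_space set"
  assumes \<mu>: "finite_measure \<mu>" "sets \<mu> = sets borel"
    and mesh: "is_mesh \<Omega> \<T> h" and D: "mesh_domain \<T> \<subseteq> \<Omega>" "\<Omega> \<in> sets borel"
  shows "(\<Sum>A\<in>interior_vertices \<T>. LINT x:mesh_domain \<T>|\<mu>. hat_fun \<T> A x) \<le> measure \<mu> \<Omega>"
proof -
  let ?D = "mesh_domain \<T>" and ?V = "interior_vertices \<T>"
  have V: "finite ?V" "?V \<subseteq> mesh_vertices \<T>"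
    using finite_mesh_vertices[OF mesh] unfolding interior_vertices_def by auto
  have int: "integrable \<mu> (\<lambda>x. indicator ?D x *\<^sub>R hat_fun \<T> A x)" if "A \<in> ?V" for A
    using set_integrable_hat_fun[OF \<mu> mesh] V(2) that unfolding set_integrable_def by blast
  have "?D \<in> sets \<mu>" using \<mu>(2) by (simp add: mesh_domain_def)
  then have int_D: "integrable \<mu> (indicator ?D :: 'a \<Rightarrow> real)"
    using finite_measure.emeasure_finite[OF \<mu>(1)] by (simp add: less_top)
  have "(\<Sum>A\<in>?V. LINT x:?D|\<mu>. hat_fun \<T> A x)
      = integral\<^sup>L \<mu> (\<lambda>x. \<Sum>A\<in>?V. indicator ?D x *\<^sub>R hat_fun \<T> A x)"
    unfolding set_lebesgue_integral_def by (rule Bochner_Integration.integral_sum[OF int, symmetric])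
  also have "\<dots> \<le> integral\<^sup>L \<mu> (indicator ?D)"
  proof (rule integral_mono[OF Bochner_Integration.integrable_sum[OF int] int_D])
    have "?D \<subseteq> \<Union>\<T>" using closure_subset closure_mesh_domain[OF mesh] by blast
    then show "(\<Sum>A\<in>?V. indicator ?D x *\<^sub>R hat_fun \<T> A x) \<le> indicator ?D x" for x
      using sum_hat_fun_le_one[OF mesh _ V(1), of x] by (cases "x \<in> ?D") auto
  qed
  also have "\<dots> = measure \<mu> ?D" using \<open>?D \<in> sets \<mu>\<close> by simp
  also have "\<dots> \<le> measure \<mu> \<Omega>"
    using finite_measure.finite_measure_mono[OF \<mu>(1) D(1)] D(2) \<mu>(2) by simp
  finally show ?thesis .
qed

lemma fe_solution_ball_integral_le:
  fixes \<Omega> :: "'a::euclidean_space set"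
  assumes \<mu>: "finite_measure \<mu>" "sets \<mu> = sets borel"
    and mesh: "is_mesh \<Omega> \<T> h" and D: "mesh_domain \<T> \<subseteq> \<Omega>" "\<Omega> \<in> sets borel"
    and R: "\<And>p. 0 \<le> R p" "locally_integrable R"
    and u: "fe_solution \<T> g R \<mu> u"
    and cover: "cball 0 r \<subseteq> (\<Union>A\<in>interior_vertices \<T>. subdiff u (mesh_domain \<T>) A)"
    and compact: "\<And>A. A \<in> interior_vertices \<T> \<Longrightarrow> compact (subdiff u (mesh_domain \<T>) A)"
  shows "(LINT p:cball 0 r|lborel. R p) \<le> measure \<mu> \<Omega>"
proof -
  let ?V = "interior_vertices \<T>"
  have "finite ?V"
    using finite_mesh_vertices[OF mesh] unfolding interior_vertices_def by auto
  then have "(LINT p:cball 0 r|lborel. R p) \<le> (\<Sum>A\<in>?V. LINT p:subdiff u (mesh_domain \<T>) A|lborel. R p)"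
    by (rule set_integral_le_sum_of_cover[OF R _ compact compact_cball cover])
  also have "\<dots> = (\<Sum>A\<in>?V. LINT x:mesh_domain \<T>|\<mu>. hat_fun \<T> A x)"
  proof (rule sum.cong[OF refl])
    fix A assume "A \<in> ?V"
    moreover have "is_hat_fun \<T> A (hat_fun \<T> A)"
      using is_hat_fun_hat_fun[OF mesh] \<open>A \<in> ?V\<close> unfolding interior_vertices_def by blast
    ultimately show "(LINT p:subdiff u (mesh_domain \<T>) A|lborel. R p) = (LINT x:mesh_domain \<T>|\<mu>. hat_fun \<T> A x)"
      using u unfolding fe_solution_def by blast
  qed
  also have "\<dots> \<le> measure \<mu> \<Omega>"
    by (rule sum_set_integral_hat_fun_le_measure[OF \<mu> mesh D])
  finally show ?thesis .
qed

lemma fe_solution_abs_le: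
  fixes \<Omega> :: "'a::euclidean_space set"
  assumes \<Omega>: "open \<Omega>" "convex \<Omega>" and mesh: "is_mesh \<Omega> \<T> h"
    and \<mu>: "finite_measure \<mu>" "sets \<mu> = sets borel"
    and g: "\<And>y. y \<in> frontier \<Omega> \<Longrightarrow> \<bar>g y\<bar> \<le> G"
    and diam: "\<And>x y. x \<in> closure \<Omega> \<Longrightarrow> y \<in> closure \<Omega> \<Longrightarrow> norm (x - y) \<le> d"
    and R: "\<And>p. 0 \<le> R p" "locally_integrable R"
    and r: "0 \<le> r * d" "measure \<mu> \<Omega> < (LINT p:cball 0 r|lborel. R p)"
    and u: "fe_solution \<T> g R \<mu> u" and x: "x \<in> mesh_domain \<T>"
  shows "\<bar>u x\<bar> \<le> G + r * d"
proof -
  let ?D = "mesh_domain \<T>"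
  have D: "?D \<subseteq> \<Omega>" using mesh_domain_subset[OF mesh \<Omega>(2,1)] .
  have uH: "u \<in> H_space \<T> g" using u unfolding fe_solution_def by blast
  have upper: "u y \<le> G" if "y \<in> ?D" for y
  proof (rule H_space_le[OF mesh _ uH])
    show "y \<in> closure ?D" using that closure_subset by blast
    show "g z \<le> G" if "z \<in> frontier \<Omega>" for z using g[OF that] by simp
  qed
  have "- (G + r * d) \<le> u x"
  proof (rule ccontr)
    assume "\<not> - (G + r * d) \<le> u x"
    then have low: "u x < - (G + r * d)" by simp
    have "cball 0 r \<subseteq> (\<Union>A\<in>interior_vertices \<T>. subdiff u ?D A)"
      using H_space_subgradient_cover[OF mesh D g diam uH x low] by auto
    moreover have "compact (subdiff u ?D A)" if "A \<in> interior_vertices \<T>" for A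
    proof (rule compact_subdiff)
      show "open ?D" by (simp add: mesh_domain_def)
      show "A \<in> ?D" using that unfolding interior_vertices_def by blast
    qed (rule upper)
    ultimately have "(LINT p:cball 0 r|lborel. R p) \<le> measure \<mu> \<Omega>"
      using fe_solution_ball_integral_le[OF \<mu> mesh D _ R u] \<Omega>(1) by auto
    then show False using r(2) by simp
  qed
  then show ?thesis using upper[OF x] r(1) by (simp add: abs_le_iff)
qed

theorem lemma6p3:
  fixes \<Omega> :: "'a::euclidean_space set"
    and g R :: "'a \<Rightarrow> real"
    and \<mu> :: "'a measure"
    and I :: "real set"
    and \<T> :: "real \<Rightarrow> 'a set set"
    and u :: "real \<Rightarrow> 'a \<Rightarrow> real"
  assumes "bounded \<Omega>" "open \<Omega>" "convex \<Omega>" "\<Omega> \<noteq> {}"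
    and "continuous_on (frontier \<Omega>) g"
    and "\<And>p. R p > 0" "locally_integrable R"
    and "sets \<mu> = sets borel" "emeasure \<mu> (- \<Omega>) = 0"
    and "strictly_convex_dom \<Omega>"
    and "emeasure \<mu> \<Omega> < (\<integral>\<^sup>+ p. ennreal (R p) \<partial>lborel)"
    and "admissible_mesh_family \<Omega> I \<T>"
    and "\<And>h. h \<in> I \<Longrightarrow> fe_solution (\<T> h) g R \<mu> (u h)"
  shows "\<exists>M>0. \<forall>h\<in>I. \<forall>x\<in>mesh_domain (\<T> h). \<bar>u h x\<bar> \<le> M"
proof -
  note \<Omega> = assms(1-3) and R = less_imp_le[OF assms(6)] assms(7) and \<mu>_sets = assms(8)
  have "\<Omega> \<in> sets \<mu>" "- \<Omega> \<in> sets \<mu>" using \<Omega>(2) \<mu>_sets by (auto simp: closed_def)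
  moreover have "emeasure \<mu> \<Omega> < \<infinity>" using assms(11) by (simp add: less_top order_less_le_trans)
  ultimately have \<mu>: "finite_measure \<mu>" using assms(9) by (rule finite_measure_null_compl)
  obtain G where G: "G > 0" "\<And>y. y \<in> frontier \<Omega> \<Longrightarrow> \<bar>g y\<bar> \<le> G"
    using compact_imp_bounded[OF compact_continuous_image[OF assms(5) compact_frontier_bounded[OF \<Omega>(1)]]]
    unfolding bounded_pos by auto
  define d where "d = diameter (closure \<Omega>)"
  have d: "0 \<le> d" "\<And>x y. x \<in> closure \<Omega> \<Longrightarrow> y \<in> closure \<Omega> \<Longrightarrow> norm (x - y) \<le> d"
    using diameter_ge_0[OF bounded_closure[OF \<Omega>(1)]]
      diameter_bounded_bound[OF bounded_closure[OF \<Omega>(1)]]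
    unfolding d_def dist_norm by auto
  obtain r where r: "0 \<le> r" "emeasure \<mu> \<Omega> < ennreal (LINT p:cball 0 r|lborel. R p)"
    using exists_ball_set_integral_gt[OF R assms(11)] by blast
  then have r_int: "measure \<mu> \<Omega> < (LINT p:cball 0 r|lborel. R p)"
    by (simp add: finite_measure.emeasure_eq_measure[OF \<mu>] ennreal_less_iff)
  have "\<bar>u h x\<bar> \<le> G + r * d" if h: "h \<in> I" and x: "x \<in> mesh_domain (\<T> h)" for h x
  proof (rule fe_solution_abs_le[OF \<Omega>(2,3) _ \<mu> \<mu>_sets G(2) d(2) R _ r_int assms(13)[OF h] x])
    show "is_mesh \<Omega> (\<T> h) h" using assms(12) h unfolding admissible_mesh_family_def by blast
    show "0 \<le> r * d" using r(1) d(1) by simp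
  qed
  moreover have "0 < G + r * d" using G(1) r(1) d(1) by (simp add: add_pos_nonneg)
  ultimately show ?thesis by blast
qed

end
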